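(* For every finitely generated group $G$ there is an exact sequence $1\to Z(RF(G))\to RF(G)\to RF_{na}(G)\to 1$, where the map $RF(G)\to RF_{na}(G)$ is the natural projection. In particular, $G$ is residually non-abelian free if and only if $G$ is residually free and $Z(G)=1$.
   Context: $\mathbb F$ denotes a non-abelian free group. $RF(G)$ is the quotient of $G$ by the intersection of the kernels of all homomorphisms $G\to\mathbb F$; $RF_{na}(G)$ is the quotient of $G$ by the intersection of the kernels of all homomorphisms $G\to\mathbb F$ with non-abelian image (so $RF_{na}(G)$ is a quotient of $RF(G)$). $G$ is residually free if $G=RF(G)$ (i.e. the natural map $G\to RF(G)$ is injective), and residually non-abelian free if $G=RF_{na}(G)$. $Z(H)$ is the center of $H$. *)

theory Defs
  imports "HOL-Algebra.Algebra"
begin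

fun word_eval :: "('a, 'm) monoid_scheme \<Rightarrow> ('a \<times> bool) list \<Rightarrow> 'a" where
  "word_eval F [] = \<one>\<^bsub>F\<^esub>"
| "word_eval F ((x, b) # w) = (if b then x else inv\<^bsub>F\<^esub> x) \<otimes>\<^bsub>F\<^esub> word_eval F w"

fun reduced_word :: "('a \<times> bool) list \<Rightarrow> bool" where
  "reduced_word [] = True"
| "reduced_word [_] = True"
| "reduced_word ((x, b) # (y, c) # w) = (\<not> (x = y \<and> b \<noteq> c) \<and> reduced_word ((y, c) # w))"

definition free_basis :: "('a, 'm) monoid_scheme \<Rightarrow> 'a set \<Rightarrow> bool" where
  "free_basis F B \<longleftrightarrow> group F \<and> B \<subseteq> carrier F \<and> generate F B = carrier F \<and>
     (\<forall>w. w \<noteq> [] \<and> reduced_word w \<and> set (map fst w) \<subseteq> B \<longrightarrow> word_eval F w \<noteq> \<one>\<^bsub>F\<^esub>)"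

definition nonabelian_free_group :: "('a, 'm) monoid_scheme \<Rightarrow> bool" where
  "nonabelian_free_group F \<longleftrightarrow> (\<exists>B. free_basis F B \<and> (\<exists>a\<in>B. \<exists>b\<in>B. a \<noteq> b))"

definition finitely_generated_group :: "('a, 'm) monoid_scheme \<Rightarrow> bool" where
  "finitely_generated_group G \<longleftrightarrow> group G \<and>
     (\<exists>S. finite S \<and> S \<subseteq> carrier G \<and> generate G S = carrier G)"

definition group_center :: "('a, 'm) monoid_scheme \<Rightarrow> 'a set" where
  "group_center G = {z \<in> carrier G. \<forall>x\<in>carrier G. x \<otimes>\<^bsub>G\<^esub> z = z \<otimes>\<^bsub>G\<^esub> x}"

definition nonabelian_set :: "('a, 'm) monoid_scheme \<Rightarrow> 'a set \<Rightarrow> bool" where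
  "nonabelian_set F S \<longleftrightarrow> (\<exists>x\<in>S. \<exists>y\<in>S. x \<otimes>\<^bsub>F\<^esub> y \<noteq> y \<otimes>\<^bsub>F\<^esub> x)"

definition RF_kernel :: "('a, 'm) monoid_scheme \<Rightarrow> ('b, 'n) monoid_scheme \<Rightarrow> 'a set" where
  "RF_kernel G F = {g \<in> carrier G. \<forall>h\<in>hom G F. h g = \<one>\<^bsub>F\<^esub>}"

definition RFna_kernel :: "('a, 'm) monoid_scheme \<Rightarrow> ('b, 'n) monoid_scheme \<Rightarrow> 'a set" where
  "RFna_kernel G F = {g \<in> carrier G. \<forall>h\<in>hom G F.
      nonabelian_set F (h ` carrier G) \<longrightarrow> h g = \<one>\<^bsub>F\<^esub>}"

definition RF :: "('a, 'm) monoid_scheme \<Rightarrow> ('b, 'n) monoid_scheme \<Rightarrow> 'a set monoid" where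
  "RF G F = G Mod (RF_kernel G F)"

definition RFna :: "('a, 'm) monoid_scheme \<Rightarrow> ('b, 'n) monoid_scheme \<Rightarrow> 'a set monoid" where
  "RFna G F = G Mod (RFna_kernel G F)"

text \<open>The natural projection RF(G) \<rightarrow> RF_na(G), sending the coset K #> g to K_na #> g.\<close>
definition RF_proj :: "('a, 'm) monoid_scheme \<Rightarrow> ('b, 'n) monoid_scheme \<Rightarrow> 'a set \<Rightarrow> 'a set" where
  "RF_proj G F C = (\<Union>g\<in>C. RFna_kernel G F #>\<^bsub>G\<^esub> g)"

definition residually_free :: "('a, 'm) monoid_scheme \<Rightarrow> ('b, 'n) monoid_scheme \<Rightarrow> bool" where
  "residually_free G F \<longleftrightarrow> RF_kernel G F = {\<one>\<^bsub>G\<^esub>}"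

definition residually_na_free :: "('a, 'm) monoid_scheme \<Rightarrow> ('b, 'n) monoid_scheme \<Rightarrow> bool" where
  "residually_na_free G F \<longleftrightarrow> RFna_kernel G F = {\<one>\<^bsub>G\<^esub>}"

end

theory Submission
  imports Defs
begin

(* Write K and N for the intersections of the kernels of all homomorphisms G -> F, resp. of
   those with non-abelian image, so RF(G) = G/K and RF_na(G) = G/N with K <= N.  The natural
   map G/K -> G/N, Kg |-> Ng, is a surjective homomorphism with kernel N/K, so everything
   reduces to showing that N/K is the centre of G/K.  Now Kg is central in G/K iff h(a) and
   h(g) commute for every a in G and every h : G -> F; and g lies in N iff h(g) = 1 whenever
   h(G) is non-abelian.  These two conditions agree because F is commutation transitive
   (x z = z x and y z = z y with z <> 1 force x y = y x): a non-trivial h(g) commuting with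
   all of h(G) would make h(G) abelian. *)

section \<open>Free reduction of words\<close>

definition letter_inv :: "'a \<times> bool \<Rightarrow> 'a \<times> bool" where
  "letter_inv l = (fst l, \<not> snd l)"

lemma letter_inv_inv [simp]: "letter_inv (letter_inv l) = l"
  by (cases l) (simp add: letter_inv_def)

lemma letter_inv_neq [simp]: "letter_inv l \<noteq> l" "l \<noteq> letter_inv l"
  by (cases l, simp add: letter_inv_def)+

lemma fst_letter_inv [simp]: "fst (letter_inv l) = fst l"
  by (simp add: letter_inv_def)

fun reduce_cons :: "'a \<times> bool \<Rightarrow> ('a \<times> bool) list \<Rightarrow> ('a \<times> bool) list" where
  "reduce_cons l [] = [l]"
| "reduce_cons l (m # w) = (if m = letter_inv l then w else l # m # w)"

fun reduce :: "('a \<times> bool) list \<Rightarrow> ('a \<times> bool) list" where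
  "reduce [] = []"
| "reduce (l # w) = reduce_cons l (reduce w)"

definition word_inv :: "('a \<times> bool) list \<Rightarrow> ('a \<times> bool) list" where
  "word_inv w = rev (map letter_inv w)"

lemma word_inv_simps [simp]:
  "word_inv [] = []" "word_inv (l # w) = word_inv w @ [letter_inv l]"
  "word_inv (u @ v) = word_inv v @ word_inv u" "word_inv (word_inv w) = w"
  "length (word_inv w) = length w"
  by (auto simp: word_inv_def rev_map[symmetric] comp_def)

lemma word_inv_Nil_iff [simp]: "word_inv w = [] \<longleftrightarrow> w = []"
  by (simp add: word_inv_def)

lemma letters_word_inv [simp]: "fst ` set (word_inv w) = fst ` set w"
  by (auto simp: word_inv_def image_image)

lemma hd_word_inv: "w \<noteq> [] \<Longrightarrow> hd (word_inv w) = letter_inv (last w)"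
  by (simp add: word_inv_def hd_rev last_map)

lemma last_word_inv: "w \<noteq> [] \<Longrightarrow> last (word_inv w) = letter_inv (hd w)"
  by (simp add: word_inv_def last_rev hd_map)

lemma reduced_Cons_iff:
  "reduced_word (l # w) \<longleftrightarrow> reduced_word w \<and> (w = [] \<or> hd w \<noteq> letter_inv l)"
  by (cases l; cases w) (auto simp: letter_inv_def)

lemma reduced_snoc_iff:
  "reduced_word (w @ [l]) \<longleftrightarrow> reduced_word w \<and> (w = [] \<or> last w \<noteq> letter_inv l)"
proof (induction w)
  case (Cons m w)
  show ?case
  proof (cases w)
    case (Cons a v)
    have "reduced_word ((m # w) @ [l]) \<longleftrightarrow> reduced_word ((a # v) @ [l]) \<and> a \<noteq> letter_inv m"
      using Cons reduced_Cons_iff[of m "(a # v) @ [l]"] by simp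
    also have "\<dots> \<longleftrightarrow> reduced_word (m # w) \<and> last (m # w) \<noteq> letter_inv l"
      using Cons.IH Cons reduced_Cons_iff[of m "a # v"] by auto
    finally show ?thesis by simp
  qed (auto simp: reduced_Cons_iff)
qed simp

lemma reduced_append:
  assumes "reduced_word u" "reduced_word v" "u = [] \<or> v = [] \<or> hd v \<noteq> letter_inv (last u)"
  shows "reduced_word (u @ v)"
  using assms
proof (induction u)
  case (Cons a u)
  then show ?case
    by (cases "u = []") (auto simp: reduced_Cons_iff[of a v] reduced_Cons_iff[of a u]
        reduced_Cons_iff[of a "u @ v"])
qed simp

lemma reduced_word_inv: "reduced_word w \<Longrightarrow> reduced_word (word_inv w)"
proof (induction w rule: rev_induct)
  case (snoc l w)
  have "reduced_word w" "w = [] \<or> last w \<noteq> letter_inv l"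
    using snoc.prems reduced_snoc_iff by blast+
  then have "reduced_word (word_inv w)" "word_inv w = [] \<or> hd (word_inv w) \<noteq> l"
    using snoc.IH by (auto simp: hd_word_inv)
  then show ?case using reduced_Cons_iff[of "letter_inv l" "word_inv w"] by simp
qed simp

lemma reduce_cons_no_cancel: "w = [] \<or> hd w \<noteq> letter_inv l \<Longrightarrow> reduce_cons l w = l # w"
  by (cases w) auto

lemma reduced_reduce_cons: "reduced_word w \<Longrightarrow> reduced_word (reduce_cons l w)"
  by (cases w) (auto simp: reduced_Cons_iff)

lemma reduced_reduce: "reduced_word (reduce w)"
  by (induction w) (auto simp: reduced_reduce_cons)

lemma reduce_reduced: "reduced_word w \<Longrightarrow> reduce w = w"
  by (induction w) (auto simp: reduced_Cons_iff reduce_cons_no_cancel)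

lemma reduce_cons_cancel: "reduced_word w \<Longrightarrow> reduce_cons l (reduce_cons (letter_inv l) w) = w"
  by (cases w) (auto simp: reduced_Cons_iff reduce_cons_no_cancel)

lemma reduce_append: "reduce (u @ v) = foldr reduce_cons u (reduce v)"
  by (induction u) auto

text \<open>Reduction is compatible with concatenation: reducing a factor first changes nothing.\<close>
lemma foldr_reduce_cons_reduce:
  assumes "reduced_word w"
  shows "foldr reduce_cons u w = foldr reduce_cons (reduce u) w"
proof (induction u)
  case (Cons l u)
  have reduced_fold: "reduced_word (foldr reduce_cons r w)" for r
    using assms by (induction r) (auto simp: reduced_reduce_cons)
  have step: "foldr reduce_cons (l # u) w = reduce_cons l (foldr reduce_cons (reduce u) w)"
    using Cons by simp
  show ?case
  proof (cases "reduce u")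
    case (Cons m r)
    then show ?thesis
      using step reduce_cons_cancel[OF reduced_fold[of r], of l] by (cases "m = letter_inv l") auto
  qed (use step in simp)
qed simp

lemma reduce_append_left: "reduce (u @ v) = reduce (reduce u @ v)"
  unfolding reduce_append by (rule foldr_reduce_cons_reduce[OF reduced_reduce])

lemma reduce_append_right: "reduce (u @ v) = reduce (u @ reduce v)"
  by (simp add: reduce_append reduce_reduced[OF reduced_reduce])

lemma reduce_word_inv_append: "reduce (word_inv v @ v) = []"
proof (induction v)
  case (Cons l v)
  have "reduce (word_inv (l # v) @ l # v)
      = foldr reduce_cons (word_inv v) (reduce_cons (letter_inv l) (reduce_cons l (reduce v)))"
    by (simp add: reduce_append)
  also have "\<dots> = foldr reduce_cons (word_inv v) (reduce v)"
    using reduce_cons_cancel[OF reduced_reduce, of "letter_inv l" v] by simp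
  also have "\<dots> = []" using Cons by (simp add: reduce_append)
  finally show ?case .
qed simp

lemma reduce_eq_Nil_imp_eq:
  assumes "reduced_word u" "reduced_word v" "reduce (u @ word_inv v) = []"
  shows "u = v"
proof -
  have "u = reduce (u @ reduce (word_inv v @ v))"
    by (simp add: reduce_word_inv_append reduce_reduced assms)
  also have "\<dots> = reduce ((u @ word_inv v) @ v)" by (simp flip: reduce_append_right)
  also have "\<dots> = reduce (reduce (u @ word_inv v) @ v)" by (rule reduce_append_left)
  also have "\<dots> = v" using assms by (simp add: reduce_reduced)
  finally show ?thesis .
qed

lemma length_reduce_cons: "length (reduce_cons l w) \<le> Suc (length w)"
  by (cases w) auto

lemma length_reduce: "length (reduce w) \<le> length w"
  by (induction w) (auto intro: le_trans[OF length_reduce_cons])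

lemma length_reduce_eq: "length (reduce w) = length w \<Longrightarrow> reduce w = w"
proof (induction w)
  case (Cons l w)
  have "length (reduce w) = length w"
    using Cons.prems length_reduce_cons[of l "reduce w"] length_reduce[of w] by simp
  then have "reduce w = w" using Cons.IH by simp
  moreover have "length (reduce_cons l w) = Suc (length w) \<Longrightarrow> reduce_cons l w = l # w"
    by (cases w) (auto split: if_splits)
  ultimately show ?case using Cons.prems by simp
qed simp

lemma letters_reduce: "set (map fst (reduce w)) \<subseteq> set (map fst w)"
proof (induction w)
  case (Cons l w)
  have "set (map fst (reduce (l # w))) \<subseteq> insert (fst l) (set (map fst (reduce w)))"
    by (cases "reduce w") auto
  then show ?case using Cons.IH by auto
qed simp

lemma reduced_commute_literally:
  assumes "reduced_word (p @ q)" "reduce (p @ q) = reduce (q @ p)"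
  shows "p @ q = q @ p"
proof -
  have pq: "reduce (p @ q) = p @ q" using assms(1) reduce_reduced by blast
  then have "reduce (q @ p) = q @ p" using assms(2) length_reduce_eq[of "q @ p"] by simp
  then show ?thesis using assms(2) pq by simp
qed

section \<open>Commuting words\<close>

definition word_pow :: "'x list \<Rightarrow> nat \<Rightarrow> 'x list" where
  "word_pow t n = concat (replicate n t)"

lemma word_pow_0 [simp]: "word_pow t 0 = []"
  by (simp add: word_pow_def)

lemma word_pow_Suc: "word_pow t (Suc n) = t @ word_pow t n"
  by (simp add: word_pow_def)

lemma word_pow_1 [simp]: "word_pow t (Suc 0) = t"
  by (simp add: word_pow_def)

lemma word_pow_add: "word_pow t (a + b) = word_pow t a @ word_pow t b"
  by (simp add: word_pow_def replicate_add)

lemma word_pow_snoc: "word_pow t n @ t = t @ word_pow t n"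
  by (metis word_pow_add word_pow_1 add.commute)

text \<open>Lyndon--Schuetzenberger: two commuting words are powers of a common word.\<close>
lemma commuting_words_common_root:
  "x @ c = c @ x \<Longrightarrow> \<exists>t a b. x = word_pow t a \<and> c = word_pow t b"
proof (induction "length x + length c" arbitrary: x c rule: less_induct)
  case less
  show ?case
  proof (cases "x = [] \<or> c = []")
    case True
    then show ?thesis by (metis word_pow_0 word_pow_1)
  next
    case nonempty: False
    show ?thesis
    proof (cases "length x \<le> length c")
      case True
      then have "take (length x) c = x" using arg_cong[OF less.prems, of "take (length x)"] by simp
      then obtain w where cw: "c = x @ w" by (metis append_take_drop_id)
      then have "x @ w = w @ x" using less.prems by simp
      moreover have "length x + length w < length x + length c" using cw nonempty by auto
      ultimately obtain t a b where "x = word_pow t a" "w = word_pow t b" using less.hyps by blast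
      then show ?thesis using cw by (metis word_pow_add)
    next
      case False
      then have "take (length c) x = c" using arg_cong[OF less.prems, of "take (length c)"] by simp
      then obtain w where xw: "x = c @ w" by (metis append_take_drop_id)
      then have "w @ c = c @ w" using less.prems by simp
      moreover have "length w + length c < length x + length c" using xw nonempty by auto
      ultimately obtain t a b where "w = word_pow t a" "c = word_pow t b" using less.hyps by blast
      then show ?thesis using xw by (metis word_pow_add)
    qed
  qed
qed

lemma word_pow_shift: "word_pow (a @ b) n @ a = a @ word_pow (b @ a) n"
  by (induction n) (simp_all add: word_pow_Suc)

lemma commute_with_pow_imp_commute:
  "u @ word_pow v n = word_pow v n @ u \<Longrightarrow> n \<ge> 1 \<Longrightarrow> u @ v = v @ u"
proof (induction "length u" arbitrary: u rule: less_induct)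
  case less
  obtain m where n: "n = Suc m" using less.prems(2) by (cases n) auto
  show ?case
  proof (cases "v = []")
    case False
    show ?thesis
    proof (cases "length v \<le> length u")
      case True
      have "take (length v) u = v"
        using True arg_cong[OF less.prems(1), of "take (length v)"] by (simp add: n word_pow_Suc)
      then obtain u' where uu: "u = v @ u'" by (metis append_take_drop_id)
      then have "v @ (u' @ word_pow v n) = v @ (word_pow v n @ u')"
        using less.prems(1) word_pow_snoc[of v n] by (metis append_assoc)
      then have "u' @ word_pow v n = word_pow v n @ u'" by simp
      then have "u' @ v = v @ u'" using less.hyps[of u'] less.prems uu False by simp
      then show ?thesis unfolding uu by (metis append_assoc)
    next
      case shorter: False
      have "take (length u) v = u"
        using shorter arg_cong[OF less.prems(1), of "take (length u)"] by (simp add: n word_pow_Suc)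
      then obtain v' where vv: "v = u @ v'" by (metis append_take_drop_id)
      then have "word_pow (u @ v') n = word_pow (v' @ u) n"
        using less.prems(1) word_pow_shift[of u v' n] by simp
      then have "take (length (u @ v')) (word_pow (u @ v') n)
          = take (length (v' @ u)) (word_pow (v' @ u) n)"
        by (simp add: add.commute)
      then have "u @ v' = v' @ u" by (simp add: n word_pow_Suc)
      then show ?thesis unfolding vv by (metis append_assoc)
    qed
  qed simp
qed

lemma commute_imp_commute_pow: "y @ t = t @ y \<Longrightarrow> y @ word_pow t a = word_pow t a @ y"
  by (induction a) (simp_all add: word_pow_Suc, metis append_assoc)

lemma words_commutation_transitive:
  assumes "c \<noteq> []" "x @ c = c @ x" "y @ c = c @ y"
  shows "x @ y = y @ x"
proof -
  obtain t a b where xt: "x = word_pow t a" and ct: "c = word_pow t b"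
    using commuting_words_common_root[OF assms(2)] by blast
  have "b \<ge> 1" using assms(1) ct by (cases b) auto
  then have "y @ t = t @ y" using commute_with_pow_imp_commute[of y t b] assms(3) ct by simp
  then show ?thesis using commute_imp_commute_pow xt by metis
qed

section \<open>Cyclically reduced words\<close>

definition cyclically_reduced :: "('a \<times> bool) list \<Rightarrow> bool" where
  "cyclically_reduced c \<longleftrightarrow> reduced_word c \<and> c \<noteq> [] \<and> hd c \<noteq> letter_inv (last c)"

lemma cyclic_decomposition:
  "reduced_word w \<Longrightarrow> w \<noteq> [] \<Longrightarrow> \<exists>u c. w = u @ c @ word_inv u \<and> cyclically_reduced c"
proof (induction "length w" arbitrary: w rule: less_induct)
  case less
  show ?case
  proof (cases "hd w \<noteq> letter_inv (last w)")
    case True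
    then show ?thesis using less.prems unfolding cyclically_reduced_def
      by (intro exI[of _ "[]"] exI[of _ w]) simp
  next
    case False
    obtain l w1 where w: "w = l # w1" using less.prems by (cases w) auto
    have "w1 \<noteq> []" using False w by auto
    then obtain m l' where w1: "w1 = m @ [l']" by (metis rev_exhaust)
    have ll: "l = letter_inv l'" using False w w1 by simp
    have "reduced_word w1" using less.prems(1) w reduced_Cons_iff by blast
    then have "reduced_word m" using w1 reduced_snoc_iff by blast
    moreover have "m \<noteq> []"
    proof
      assume "m = []"
      then have "reduced_word [l, l']" using less.prems(1) w w1 by simp
      then show False using ll reduced_Cons_iff[of l "[l']"] by simp
    qed
    moreover have "length m < length w" using w w1 by simp
    ultimately obtain u c where "m = u @ c @ word_inv u" "cyclically_reduced c"
      using less.hyps by blast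
    moreover have "w = (l # u) @ c @ word_inv (l # u)" using w w1 ll calculation(1) by simp
    ultimately show ?thesis by blast
  qed
qed

text \<open>If a reduced word p commutes freely with a cyclically reduced word q, and so does its
  inverse, then p or its inverse commutes with q literally: at most one of the products
  p q and p^-1 q involves cancellation.\<close>
lemma cyclically_reduced_commute_literally:
  assumes p: "reduced_word p" and q: "cyclically_reduced q"
    and comm: "reduce (p @ q) = reduce (q @ p)"
    and comm_inv: "reduce (word_inv p @ q) = reduce (q @ word_inv p)"
  shows "p @ q = q @ p \<or> word_inv p @ q = q @ word_inv p"
proof (cases "reduced_word (p @ q)")
  case True
  then show ?thesis using reduced_commute_literally comm by blast
next
  case False
  have rq: "reduced_word q" and qne: "q \<noteq> []" using q by (auto simp: cyclically_reduced_def)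
  have pne: "p \<noteq> []" using False p rq reduced_append by blast
  have "reduce (p @ q) \<noteq> p @ q" using False reduced_reduce[of "p @ q"] by auto
  then have "length (reduce (p @ q)) < length (p @ q)"
    using length_reduce[of "p @ q"] length_reduce_eq[of "p @ q"] by (auto simp: order_less_le)
  then have "length (reduce (q @ p)) < length (q @ p)" using comm by simp
  then have "\<not> reduced_word (q @ p)" using reduce_reduced by fastforce
  then have "hd p = letter_inv (last q)" using p rq reduced_append by blast
  then have "hd q \<noteq> letter_inv (last (word_inv p))"
    using q last_word_inv[OF pne] by (simp add: cyclically_reduced_def)
  then have "reduced_word (word_inv p @ q)"
    using reduced_append[OF reduced_word_inv[OF p] rq] by blast
  then show ?thesis using reduced_commute_literally comm_inv by blast
qed

section \<open>Words evaluated in a group\<close>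

context group
begin

lemma word_eval_closed: "set (map fst w) \<subseteq> carrier G \<Longrightarrow> word_eval G w \<in> carrier G"
proof (induction w)
  case (Cons l w) then show ?case by (cases l) auto
qed simp

lemma word_eval_append:
  "set (map fst u) \<subseteq> carrier G \<Longrightarrow> set (map fst v) \<subseteq> carrier G \<Longrightarrow>
    word_eval G (u @ v) = word_eval G u \<otimes> word_eval G v"
proof (induction u)
  case (Cons l u) then show ?case by (cases l) (auto simp: m_assoc word_eval_closed)
qed (simp add: word_eval_closed)

lemma word_eval_reduce_cons:
  assumes "fst l \<in> carrier G" "set (map fst w) \<subseteq> carrier G"
  shows "word_eval G (reduce_cons l w) = word_eval G (l # w)"
proof (cases w)
  case (Cons m w')
  obtain x b where l: "l = (x, b)" by (cases l)
  have w': "word_eval G w' \<in> carrier G" using assms Cons by (simp add: word_eval_closed)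
  show ?thesis
  proof (cases "m = letter_inv l")
    case True
    then have "w = (x, \<not> b) # w'" using Cons l by (simp add: letter_inv_def)
    then show ?thesis
      using True Cons assms(1) w' l by (cases b) (simp_all add: m_assoc[symmetric])
  qed (use Cons in simp)
qed simp

lemma word_eval_reduce: "set (map fst w) \<subseteq> carrier G \<Longrightarrow> word_eval G (reduce w) = word_eval G w"
proof (induction w)
  case (Cons l w)
  have "set (map fst (reduce w)) \<subseteq> carrier G"
    using letters_reduce[of w] Cons.prems by auto
  then show ?case using Cons word_eval_reduce_cons[of l "reduce w"] by (cases l) simp
qed simp

lemma word_eval_word_inv:
  "set (map fst w) \<subseteq> carrier G \<Longrightarrow> word_eval G (word_inv w) = inv (word_eval G w)"
proof (induction w)
  case (Cons l w)
  obtain x b where l: "l = (x, b)" by (cases l)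
  have c: "word_eval G w \<in> carrier G" "x \<in> carrier G"
    using Cons.prems l by (auto simp: word_eval_closed)
  have "word_eval G (word_inv (l # w)) = word_eval G (word_inv w) \<otimes> word_eval G [letter_inv l]"
    using Cons.prems by (simp add: word_eval_append)
  also have "\<dots> = inv (word_eval G w) \<otimes> inv (if b then x else inv x)"
    using Cons c l by (auto simp: letter_inv_def)
  also have "\<dots> = inv ((if b then x else inv x) \<otimes> word_eval G w)"
    using c by (simp add: inv_mult_group)
  finally show ?case using l by simp
qed simp

lemma generate_word:
  assumes S: "S \<subseteq> carrier G" and g: "g \<in> generate G S"
  shows "\<exists>w. set (map fst w) \<subseteq> S \<and> word_eval G w = g"
  using g
proof (induction rule: generate.induct)
  case one then show ?case by (intro exI[of _ "[]"]) simp
next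
  case (incl h) then show ?case using S by (intro exI[of _ "[(h, True)]"]) auto
next
  case (inv h) then show ?case using S by (intro exI[of _ "[(h, False)]"]) auto
next
  case (eng h1 h2)
  then obtain w1 w2 where "set (map fst w1) \<subseteq> S" "word_eval G w1 = h1"
    "set (map fst w2) \<subseteq> S" "word_eval G w2 = h2" by blast
  moreover have "word_eval G (w1 @ w2) = h1 \<otimes> h2"
    using calculation S word_eval_append[of w1 w2] by auto
  ultimately show ?case by (intro exI[of _ "w1 @ w2"]) simp
qed

lemma mult_inv_cancel_left: "g \<in> carrier G \<Longrightarrow> x \<in> carrier G \<Longrightarrow> g \<otimes> (inv g \<otimes> x) = x"
  and inv_mult_cancel_left: "g \<in> carrier G \<Longrightarrow> x \<in> carrier G \<Longrightarrow> inv g \<otimes> (g \<otimes> x) = x"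
  by (simp_all add: m_assoc[symmetric])

lemma conj_commute_iff:
  "a \<in> carrier G \<Longrightarrow> b \<in> carrier G \<Longrightarrow> g \<in> carrier G \<Longrightarrow>
   (inv g \<otimes> a \<otimes> g) \<otimes> (inv g \<otimes> b \<otimes> g) = (inv g \<otimes> b \<otimes> g) \<otimes> (inv g \<otimes> a \<otimes> g)
     \<longleftrightarrow> a \<otimes> b = b \<otimes> a"
proof -
  assume abg: "a \<in> carrier G" "b \<in> carrier G" "g \<in> carrier G"
  have "(inv g \<otimes> x \<otimes> g) \<otimes> (inv g \<otimes> y \<otimes> g) = inv g \<otimes> (x \<otimes> y) \<otimes> g"
    if "x \<in> carrier G" "y \<in> carrier G" for x y
    using that abg by (simp add: m_assoc mult_inv_cancel_left)
  then show ?thesis using abg by simp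
qed

lemma inv_commute_iff:
  "a \<in> carrier G \<Longrightarrow> b \<in> carrier G \<Longrightarrow> inv a \<otimes> b = b \<otimes> inv a \<longleftrightarrow> a \<otimes> b = b \<otimes> a"
  by (metis inv_closed inv_solve_left inv_solve_right m_assoc m_closed)

lemma mult_inv_eq_one_iff: "a \<in> carrier G \<Longrightarrow> b \<in> carrier G \<Longrightarrow> a \<otimes> inv b = \<one> \<longleftrightarrow> a = b"
  by (metis inv_closed inv_inv r_inv inv_equality)

lemma commute_up_to_inv:
  assumes a: "a \<in> carrier G" and b: "b \<in> carrier G"
    and "a' = a \<or> a' = inv a" "b' = b \<or> b' = inv b" "a' \<otimes> b' = b' \<otimes> a'"
  shows "a \<otimes> b = b \<otimes> a"
proof -
  have b': "b' \<in> carrier G" using assms by auto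
  have "a \<otimes> b' = b' \<otimes> a" using assms(3,5) inv_commute_iff[OF a b'] by auto
  then show ?thesis using assms(4) inv_commute_iff[OF b a] by auto
qed

end

section \<open>Normal forms in a group with a free basis\<close>

lemma free_basis_group: "free_basis F B \<Longrightarrow> group F"
  and free_basis_subset: "free_basis F B \<Longrightarrow> B \<subseteq> carrier F"
  by (simp_all add: free_basis_def)

lemma free_basis_normal_form_unique:
  assumes fb: "free_basis F B" and u: "set (map fst u) \<subseteq> B" "reduced_word u"
    and v: "set (map fst v) \<subseteq> B" "reduced_word v" and e: "word_eval F u = word_eval F v"
  shows "u = v"
proof -
  interpret group F using fb by (rule free_basis_group)
  have BF: "B \<subseteq> carrier F" using fb by (rule free_basis_subset)
  let ?w = "reduce (u @ word_inv v)"
  have "set (map fst (u @ word_inv v)) \<subseteq> B" using u v by simp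
  then have letters: "set (map fst ?w) \<subseteq> B" using letters_reduce[of "u @ word_inv v"] by blast
  have uF: "set (map fst u) \<subseteq> carrier F" and vF: "set (map fst v) \<subseteq> carrier F"
    using u v BF by auto
  then have "word_eval F ?w = word_eval F (u @ word_inv v)"
    by (intro word_eval_reduce) simp
  also have "\<dots> = word_eval F u \<otimes>\<^bsub>F\<^esub> inv\<^bsub>F\<^esub> (word_eval F v)"
    using uF vF by (simp add: word_eval_append word_eval_word_inv)
  also have "\<dots> = \<one>\<^bsub>F\<^esub>" using e word_eval_closed[OF vF] by simp
  finally have "?w = []"
    using fb letters reduced_reduce unfolding free_basis_def by blast
  then show ?thesis using reduce_eq_Nil_imp_eq u v by blast
qed

lemma free_basis_normal_form:
  assumes fb: "free_basis F B" and g: "g \<in> carrier F"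
  shows "\<exists>w. set (map fst w) \<subseteq> B \<and> reduced_word w \<and> word_eval F w = g"
proof -
  interpret group F using fb by (rule free_basis_group)
  have BF: "B \<subseteq> carrier F" using fb by (rule free_basis_subset)
  have "g \<in> generate F B" using fb g by (simp add: free_basis_def)
  then obtain w where w: "set (map fst w) \<subseteq> B" "word_eval F w = g"
    using generate_word[OF BF] by blast
  moreover have "word_eval F (reduce w) = word_eval F w"
    using w(1) BF by (intro word_eval_reduce) blast
  ultimately show ?thesis
    using letters_reduce[of w] reduced_reduce[of w] by (intro exI[of _ "reduce w"]) blast
qed

lemma free_basis_reduce_eq:
  assumes fb: "free_basis F B" and u: "set (map fst u) \<subseteq> B" and v: "set (map fst v) \<subseteq> B"
    and e: "word_eval F u = word_eval F v"
  shows "reduce u = reduce v"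
proof -
  interpret group F using fb by (rule free_basis_group)
  have BF: "B \<subseteq> carrier F" using fb by (rule free_basis_subset)
  have "set (map fst (reduce u)) \<subseteq> B" "set (map fst (reduce v)) \<subseteq> B"
    using u v letters_reduce[of u] letters_reduce[of v] by blast+
  moreover have "word_eval F (reduce u) = word_eval F (reduce v)"
    using u v BF e word_eval_reduce[of u] word_eval_reduce[of v] by (simp add: subset_eq)
  ultimately show ?thesis
    using free_basis_normal_form_unique[OF fb _ reduced_reduce _ reduced_reduce] by blast
qed

section \<open>Free groups are commutation transitive\<close>

definition commutation_transitive :: "('a, 'm) monoid_scheme \<Rightarrow> bool" where
  "commutation_transitive F \<longleftrightarrow> (\<forall>x\<in>carrier F. \<forall>y\<in>carrier F. \<forall>z\<in>carrier F.
     z \<noteq> \<one>\<^bsub>F\<^esub> \<and> x \<otimes>\<^bsub>F\<^esub> z = z \<otimes>\<^bsub>F\<^esub> x \<and> y \<otimes>\<^bsub>F\<^esub> z = z \<otimes>\<^bsub>F\<^esub> y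
       \<longrightarrow> x \<otimes>\<^bsub>F\<^esub> y = y \<otimes>\<^bsub>F\<^esub> x)"

lemma commuting_element_word:
  assumes fb: "free_basis F B" and x: "x \<in> carrier F"
    and c: "set (map fst c) \<subseteq> B" "cyclically_reduced c"
    and comm: "x \<otimes>\<^bsub>F\<^esub> word_eval F c = word_eval F c \<otimes>\<^bsub>F\<^esub> x"
  shows "\<exists>p. set (map fst p) \<subseteq> B \<and> p @ c = c @ p \<and>
    (word_eval F p = x \<or> word_eval F p = inv\<^bsub>F\<^esub> x)"
proof -
  interpret group F using fb by (rule free_basis_group)
  have BF: "B \<subseteq> carrier F" using fb by (rule free_basis_subset)
  obtain p where p: "set (map fst p) \<subseteq> B" "reduced_word p" "word_eval F p = x"
    using free_basis_normal_form[OF fb x] by blast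
  have pF: "set (map fst p) \<subseteq> carrier F" and cF: "set (map fst c) \<subseteq> carrier F"
    using p c BF by auto
  have comm_inv: "inv\<^bsub>F\<^esub> x \<otimes>\<^bsub>F\<^esub> word_eval F c = word_eval F c \<otimes>\<^bsub>F\<^esub> inv\<^bsub>F\<^esub> x"
    using inv_commute_iff[OF x word_eval_closed[OF cF]] comm by simp
  have "word_eval F (p @ c) = word_eval F (c @ p)"
    using pF cF comm p(3) by (simp add: word_eval_append)
  then have red_comm: "reduce (p @ c) = reduce (c @ p)"
    using free_basis_reduce_eq[OF fb, of "p @ c" "c @ p"] p(1) c(1) by simp
  have "word_eval F (word_inv p @ c) = word_eval F (c @ word_inv p)"
    using pF cF comm_inv p(3) by (simp add: word_eval_append word_eval_word_inv)
  then have red_comm_inv: "reduce (word_inv p @ c) = reduce (c @ word_inv p)"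
    using free_basis_reduce_eq[OF fb, of "word_inv p @ c" "c @ word_inv p"] p(1) c(1) by simp
  have "p @ c = c @ p \<or> word_inv p @ c = c @ word_inv p"
    using cyclically_reduced_commute_literally[OF p(2) c(2) red_comm red_comm_inv] .
  then show ?thesis
  proof
    assume "word_inv p @ c = c @ word_inv p"
    then show ?thesis using p pF by (intro exI[of _ "word_inv p"]) (simp add: word_eval_word_inv)
  qed (use p in blast)
qed

theorem free_basis_commutation_transitive:
  assumes fb: "free_basis F B"
  shows "commutation_transitive F"
  unfolding commutation_transitive_def
proof (intro ballI impI)
  interpret group F using fb by (rule free_basis_group)
  have BF: "B \<subseteq> carrier F" using fb by (rule free_basis_subset)
  fix x y z assume x: "x \<in> carrier F" and y: "y \<in> carrier F" and z: "z \<in> carrier F"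
    and comm: "z \<noteq> \<one>\<^bsub>F\<^esub> \<and> x \<otimes>\<^bsub>F\<^esub> z = z \<otimes>\<^bsub>F\<^esub> x \<and> y \<otimes>\<^bsub>F\<^esub> z = z \<otimes>\<^bsub>F\<^esub> y"
  obtain w where w: "set (map fst w) \<subseteq> B" "reduced_word w" "word_eval F w = z"
    using free_basis_normal_form[OF fb z] by blast
  moreover have "w \<noteq> []" using w(3) comm by auto
  ultimately obtain u c where uc: "w = u @ c @ word_inv u" "cyclically_reduced c"
    using cyclic_decomposition by blast
  have uF: "set (map fst u) \<subseteq> carrier F" and cB: "set (map fst c) \<subseteq> B"
    using w(1) uc(1) BF by auto
  then have cF: "set (map fst c) \<subseteq> carrier F" using BF by blast
  define g where "g = word_eval F u"
  have g: "g \<in> carrier F" using uF word_eval_closed g_def by auto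
  text \<open>Conjugating by g turns z into the value of the cyclically reduced word c.\<close>
  define conj where "conj a = inv\<^bsub>F\<^esub> g \<otimes>\<^bsub>F\<^esub> a \<otimes>\<^bsub>F\<^esub> g" for a
  have "z = g \<otimes>\<^bsub>F\<^esub> (word_eval F c \<otimes>\<^bsub>F\<^esub> inv\<^bsub>F\<^esub> g)"
    using w(3) uc(1) uF cF by (simp add: g_def word_eval_append word_eval_word_inv word_eval_closed)
  then have conj_z: "conj z = word_eval F c"
    using g word_eval_closed[OF cF] by (simp add: conj_def m_assoc inv_mult_cancel_left)
  have comm_c: "conj a \<otimes>\<^bsub>F\<^esub> word_eval F c = word_eval F c \<otimes>\<^bsub>F\<^esub> conj a"
    if "a \<in> carrier F" "a \<otimes>\<^bsub>F\<^esub> z = z \<otimes>\<^bsub>F\<^esub> a" for a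
    using conj_commute_iff[OF that(1) z g] that(2) conj_z unfolding conj_def by simp
  have conj_closed: "conj a \<in> carrier F" if "a \<in> carrier F" for a
    using that g by (simp add: conj_def)
  obtain p where p: "set (map fst p) \<subseteq> B" "p @ c = c @ p"
      "word_eval F p = conj x \<or> word_eval F p = inv\<^bsub>F\<^esub> conj x"
    using commuting_element_word[OF fb conj_closed[OF x] cB uc(2) comm_c[OF x]] comm by blast
  obtain q where q: "set (map fst q) \<subseteq> B" "q @ c = c @ q"
      "word_eval F q = conj y \<or> word_eval F q = inv\<^bsub>F\<^esub> conj y"
    using commuting_element_word[OF fb conj_closed[OF y] cB uc(2) comm_c[OF y]] comm by blast
  have "c \<noteq> []" using uc(2) by (simp add: cyclically_reduced_def)
  then have "p @ q = q @ p" using words_commutation_transitive p(2) q(2) by blast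
  then have "word_eval F p \<otimes>\<^bsub>F\<^esub> word_eval F q = word_eval F q \<otimes>\<^bsub>F\<^esub> word_eval F p"
    using p(1) q(1) BF by (metis word_eval_append subset_trans)
  then have "conj x \<otimes>\<^bsub>F\<^esub> conj y = conj y \<otimes>\<^bsub>F\<^esub> conj x"
    using commute_up_to_inv[OF conj_closed[OF x] conj_closed[OF y] p(3) q(3)] by blast
  then show "x \<otimes>\<^bsub>F\<^esub> y = y \<otimes>\<^bsub>F\<^esub> x" using conj_commute_iff[OF x y g] by (simp add: conj_def)
qed

section \<open>Quotients by intersections of kernels\<close>

lemma common_kernel_normal:
  fixes G :: "('a, 'm) monoid_scheme" (structure) and F :: "('b, 'n) monoid_scheme"
  assumes G: "group G" and F: "group F" and H: "H \<subseteq> hom G F"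
  shows "{g \<in> carrier G. \<forall>h\<in>H. h g = \<one>\<^bsub>F\<^esub>} \<lhd> G"
proof -
  interpret group G by (rule G)
  interpret F: group F by (rule F)
  let ?K = "{g \<in> carrier G. \<forall>h\<in>H. h g = \<one>\<^bsub>F\<^esub>}"
  have hom: "group_hom G F h" if "h \<in> H" for h
    using that H G F by (auto simp: group_hom_def group_hom_axioms_def)
  have "subgroup ?K G"
  proof (rule subgroupI)
    have "\<one> \<in> ?K" using group_hom.hom_one[OF hom] by simp
    then show "?K \<noteq> {}" by blast
    show "inv a \<in> ?K" if a: "a \<in> ?K" for a
    proof -
      have "h (inv a) = \<one>\<^bsub>F\<^esub>" if h: "h \<in> H" for h
      proof -
        have "h a = \<one>\<^bsub>F\<^esub>" using a h by blast
        then show ?thesis using group_hom.hom_inv[OF hom[OF h]] a by simp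
      qed
      then show ?thesis using a by simp
    qed
    show "a \<otimes> b \<in> ?K" if "a \<in> ?K" "b \<in> ?K" for a b
      using that H hom_mult by fastforce
  qed auto
  moreover have "x \<otimes> k \<otimes> inv x \<in> ?K" if x: "x \<in> carrier G" and k: "k \<in> ?K" for x k
  proof -
    have "h (x \<otimes> k \<otimes> inv x) = \<one>\<^bsub>F\<^esub>" if h: "h \<in> H" for h
    proof -
      interpret group_hom G F h by (rule hom[OF h])
      have "h k = \<one>\<^bsub>F\<^esub>" using k h by blast
      then show ?thesis using x k by simp
    qed
    then show ?thesis using x k by simp
  qed
  ultimately show ?thesis using normal_inv_iff by blast
qed

lemma (in group) rcos_eq_iff:
  assumes "subgroup H G" "u \<in> carrier G" "v \<in> carrier G"
  shows "H #> u = H #> v \<longleftrightarrow> u \<otimes> inv v \<in> H"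
  using assms subgroup.rcos_module[OF assms(1) is_group] rcos_self repr_independence by metis

lemma (in normal) coset_central_iff:
  assumes g: "g \<in> carrier G"
  shows "H #> g \<in> group_center (G Mod H) \<longleftrightarrow> (\<forall>a\<in>carrier G. a \<otimes> g \<otimes> inv (g \<otimes> a) \<in> H)"
proof -
  have "H #> g \<in> group_center (G Mod H)
      \<longleftrightarrow> (\<forall>a\<in>carrier G. (H #> a) <#> (H #> g) = (H #> g) <#> (H #> a))"
    using g rcosetsI[OF subset] unfolding group_center_def FactGroup_def RCOSETS_def by auto
  also have "\<dots> \<longleftrightarrow> (\<forall>a\<in>carrier G. H #> (a \<otimes> g) = H #> (g \<otimes> a))"
    using g rcos_sum by (intro ball_cong) auto
  also have "\<dots> \<longleftrightarrow> (\<forall>a\<in>carrier G. a \<otimes> g \<otimes> inv (g \<otimes> a) \<in> H)"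
    using g rcos_eq_iff[OF subgroup_axioms] by (intro ball_cong) auto
  finally show ?thesis .
qed

lemma (in group) union_cosets_subgroup:
  assumes K: "subgroup K G" and N: "subgroup N G" and KN: "K \<subseteq> N" and g: "g \<in> carrier G"
  shows "(\<Union>g'\<in>K #> g. N #> g') = N #> g"
proof -
  have "N #> g' = N #> g" if "g' \<in> K #> g" for g'
    using that KN repr_independence[OF _ g N] unfolding r_coset_def by blast
  moreover have "g \<in> K #> g" using rcos_self[OF g K] .
  ultimately show ?thesis by blast
qed

section \<open>RF(G) and RF_na(G) with a commutation-transitive target\<close>

locale residual_quotients =
  fixes G :: "('a, 'm) monoid_scheme" (structure) and F :: "('b, 'n) monoid_scheme"
  assumes G: "group G" and F: "group F" and transitive: "commutation_transitive F"
begin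

abbreviation "K \<equiv> RF_kernel G F"
abbreviation "N \<equiv> RFna_kernel G F"

lemma K_normal: "K \<lhd> G"
  unfolding RF_kernel_def using common_kernel_normal[OF G F, of "hom G F"] by simp

lemma N_normal: "N \<lhd> G"
proof -
  have N_eq: "N = {g \<in> carrier G.
      \<forall>h\<in>{h \<in> hom G F. nonabelian_set F (h ` carrier G)}. h g = \<one>\<^bsub>F\<^esub>}"
    unfolding RFna_kernel_def by auto
  show ?thesis unfolding N_eq by (rule common_kernel_normal[OF G F]) blast
qed

lemma K_subgroup: "subgroup K G" and N_subgroup: "subgroup N G"
  using K_normal N_normal normal_imp_subgroup by blast+

lemma K_subset_N: "K \<subseteq> N"
  unfolding RF_kernel_def RFna_kernel_def by auto

lemma commutator_in_K_iff:
  assumes a: "a \<in> carrier G" and g: "g \<in> carrier G"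
  shows "a \<otimes> g \<otimes> inv (g \<otimes> a) \<in> K \<longleftrightarrow> (\<forall>h\<in>hom G F. h a \<otimes>\<^bsub>F\<^esub> h g = h g \<otimes>\<^bsub>F\<^esub> h a)"
proof -
  interpret group G by (rule G)
  interpret F: group F by (rule F)
  have "h (a \<otimes> g \<otimes> inv (g \<otimes> a)) = \<one>\<^bsub>F\<^esub> \<longleftrightarrow> h a \<otimes>\<^bsub>F\<^esub> h g = h g \<otimes>\<^bsub>F\<^esub> h a"
    if h: "h \<in> hom G F" for h
  proof -
    have "h (a \<otimes> g \<otimes> inv (g \<otimes> a)) = h (a \<otimes> g) \<otimes>\<^bsub>F\<^esub> inv\<^bsub>F\<^esub> h (g \<otimes> a)"
      using a g hom_mult[OF h] group_hom.hom_inv[of G F h] G F h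
      by (simp add: group_hom_def group_hom_axioms_def)
    then show ?thesis
      using a g hom_mult[OF h] hom_in_carrier[OF h] F.mult_inv_eq_one_iff by simp
  qed
  then show ?thesis unfolding RF_kernel_def using a g by auto
qed

lemma N_iff_images_central:
  assumes g: "g \<in> carrier G"
  shows "g \<in> N \<longleftrightarrow> (\<forall>a\<in>carrier G. \<forall>h\<in>hom G F. h a \<otimes>\<^bsub>F\<^esub> h g = h g \<otimes>\<^bsub>F\<^esub> h a)"
proof
  interpret F: group F by (rule F)
  show "\<forall>a\<in>carrier G. \<forall>h\<in>hom G F. h a \<otimes>\<^bsub>F\<^esub> h g = h g \<otimes>\<^bsub>F\<^esub> h a" if "g \<in> N"
    using that g hom_in_carrier unfolding RFna_kernel_def nonabelian_set_def by fastforce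
next
  assume central: "\<forall>a\<in>carrier G. \<forall>h\<in>hom G F. h a \<otimes>\<^bsub>F\<^esub> h g = h g \<otimes>\<^bsub>F\<^esub> h a"
  have "h g = \<one>\<^bsub>F\<^esub>" if h: "h \<in> hom G F" and na: "nonabelian_set F (h ` carrier G)" for h
  proof (rule ccontr)
    obtain a b where ab: "a \<in> carrier G" "b \<in> carrier G"
      and noncomm: "h a \<otimes>\<^bsub>F\<^esub> h b \<noteq> h b \<otimes>\<^bsub>F\<^esub> h a"
      using na unfolding nonabelian_set_def by auto
    assume "h g \<noteq> \<one>\<^bsub>F\<^esub>"
    then show False
      using transitive noncomm central ab h g hom_in_carrier[OF h]
      unfolding commutation_transitive_def by metis
  qed
  then show "g \<in> N" using g unfolding RFna_kernel_def by auto
qed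

lemma RF_proj_coset: "g \<in> carrier G \<Longrightarrow> RF_proj G F (K #> g) = N #> g"
  unfolding RF_proj_def
  by (rule group.union_cosets_subgroup[OF G K_subgroup N_subgroup K_subset_N])

lemma carrier_RF: "carrier (RF G F) = rcosets K"
  and carrier_RFna: "carrier (RFna G F) = rcosets N"
  by (simp_all add: RF_def RFna_def FactGroup_def)

lemma RF_proj_hom: "RF_proj G F \<in> hom (RF G F) (RFna G F)"
proof -
  interpret group G by (rule G)
  interpret K: normal K G by (rule K_normal)
  interpret N: normal N G by (rule N_normal)
  show ?thesis
    by (rule homI) (auto simp: carrier_RF carrier_RFna RCOSETS_def RF_def RFna_def FactGroup_def
        RF_proj_coset K.rcos_sum N.rcos_sum)
qed

lemma RF_proj_surj: "RF_proj G F ` carrier (RF G F) = carrier (RFna G F)"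
  using RF_proj_coset unfolding carrier_RF carrier_RFna RCOSETS_def by auto

lemma RF_proj_kernel: "kernel (RF G F) (RFna G F) (RF_proj G F) = group_center (RF G F)"
proof -
  interpret group G by (rule G)
  interpret K: normal K G by (rule K_normal)
  have "x \<in> kernel (RF G F) (RFna G F) (RF_proj G F) \<longleftrightarrow> x \<in> group_center (RF G F)"
    if x: "x \<in> carrier (RF G F)" for x
  proof -
    obtain g where g: "g \<in> carrier G" and xg: "x = K #> g"
      using x unfolding carrier_RF RCOSETS_def by blast
    have "x \<in> kernel (RF G F) (RFna G F) (RF_proj G F) \<longleftrightarrow> N #> g = N"
      using x g xg RF_proj_coset by (simp add: kernel_def RFna_def)
    also have "\<dots> \<longleftrightarrow> g \<in> N"
      using coset_join1[OF _ g N_subgroup] coset_join2[OF g N_subgroup] by blast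
    also have "\<dots> \<longleftrightarrow> (\<forall>a\<in>carrier G. a \<otimes> g \<otimes> inv (g \<otimes> a) \<in> K)"
      using N_iff_images_central[OF g] commutator_in_K_iff[OF _ g] by blast
    also have "\<dots> \<longleftrightarrow> x \<in> group_center (RF G F)"
      using K.coset_central_iff[OF g] xg by (simp add: RF_def)
    finally show ?thesis .
  qed
  moreover have "kernel (RF G F) (RFna G F) (RF_proj G F) \<subseteq> carrier (RF G F)"
    and "group_center (RF G F) \<subseteq> carrier (RF G F)"
    unfolding kernel_def group_center_def by blast+
  ultimately show ?thesis by blast
qed

lemma center_subset_N: "group_center G \<subseteq> N"
proof
  fix z assume "z \<in> group_center G"
  then have z: "z \<in> carrier G" and central: "\<forall>a\<in>carrier G. a \<otimes> z = z \<otimes> a"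
    unfolding group_center_def by auto
  have "h a \<otimes>\<^bsub>F\<^esub> h z = h z \<otimes>\<^bsub>F\<^esub> h a" if "a \<in> carrier G" "h \<in> hom G F" for a h
    using that z central hom_mult[of h G F] by metis
  then show "z \<in> N" using N_iff_images_central[OF z] by blast
qed

lemma N_subset_center_if_residually_free: "K = {\<one>} \<Longrightarrow> N \<subseteq> group_center G"
proof
  interpret group G by (rule G)
  fix g assume K1: "K = {\<one>}" and gN: "g \<in> N"
  have g: "g \<in> carrier G" using gN N_subgroup subgroup.subset by blast
  have "a \<otimes> g = g \<otimes> a" if a: "a \<in> carrier G" for a
  proof -
    have "a \<otimes> g \<otimes> inv (g \<otimes> a) \<in> K"
      using commutator_in_K_iff[OF a g] N_iff_images_central[OF g] gN a by blast
    then show ?thesis using K1 mult_inv_eq_one_iff a g by simp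
  qed
  then show "g \<in> group_center G" using g unfolding group_center_def by blast
qed

lemma residually_na_free_iff: "residually_na_free G F \<longleftrightarrow> residually_free G F \<and> group_center G = {\<one>}"
proof -
  have "\<one> \<in> K" using K_subgroup subgroup.one_closed by blast
  moreover have "\<one> \<in> group_center G"
    using group.is_monoid[OF G] by (simp add: group_center_def)
  ultimately show ?thesis
    using K_subset_N center_subset_N N_subset_center_if_residually_free
    unfolding residually_na_free_def residually_free_def by blast
qed

end

theorem mainTheorem4:
  fixes G :: "('a, 'm) monoid_scheme" and F :: "('b, 'n) monoid_scheme"
  assumes "finitely_generated_group G"
    and "nonabelian_free_group F"
  shows "RF_proj G F \<in> hom (RF G F) (RFna G F)
      \<and> RF_proj G F ` carrier (RF G F) = carrier (RFna G F)
      \<and> kernel (RF G F) (RFna G F) (RF_proj G F) = group_center (RF G F)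
      \<and> (residually_na_free G F \<longleftrightarrow>
           residually_free G F \<and> group_center G = {\<one>\<^bsub>G\<^esub>})"
proof -
  obtain B where fb: "free_basis F B"
    using assms(2) unfolding nonabelian_free_group_def by blast
  have "group G" using assms(1) unfolding finitely_generated_group_def by blast
  then interpret residual_quotients G F
    using free_basis_group[OF fb] free_basis_commutation_transitive[OF fb]
    by (rule residual_quotients.intro)
  show ?thesis
    using RF_proj_hom RF_proj_surj RF_proj_kernel residually_na_free_iff by blast
qed

end
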